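(* For every regular epistemic transition system, every history $h$ of it and every coalition $C$: $h\nVdash\mathsf{H}_C\bot$.
   Context: Fix a set of agents $\mathcal{A}$; a coalition is a subset of $\mathcal{A}$. Language $\Phi$: $\phi ::= p \mid \neg\phi \mid \phi\to\phi \mid \mathsf{K}_C\phi \mid \mathsf{H}_C\phi$ ($C\subseteq\mathcal{A}$); $\bot$ is the usual false constant. An epistemic transition system is a tuple $(W,\{\sim_a\}_{a\in\mathcal{A}},V,M,\pi)$ with $W$ a set of states, each $\sim_a$ an equivalence relation on $W$, $V$ a nonempty set, $M\subseteq W\times V^{\mathcal{A}}\times W$, $\pi$ mapping propositional variables to subsets of $W$; it is regular if for each $w\in W$ and $\mathbf{s}\in V^{\mathcal{A}}$ there is $w'\in W$ with $(w,\mathbf{s},w')\in M$. For profiles $\mathbf{s}_1\in V^{C_1},\mathbf{s}_2\in V^{C_2}$ and $C\subseteq C_1\cap C_2$, $\mathbf{s}_1=_C\mathbf{s}_2$ means $(\mathbf{s}_1)_a=(\mathbf{s}_2)_a$ for all $a\in C$. A history is a sequence $(w_0,\mathbf{s}_1,w_1,\dots,\mathbf{s}_n,w_n)$, $n\ge0$, with $w_i\in W$, $\mathbf{s}_i\in V^{\mathcal{A}}$, $(w_i,\mathbf{s}_{i+1},w_{i+1})\in M$; $hd(h)$ is its last element, and $h::\mathbf{s}::w$ denotes extension. $h\approx_a h'$ iff the histories have the same length $n$, their $i$-th states are $\sim_a$-related for all $i$, and their $i$-th profiles agree at $a$ for all $i$; $h\approx_C h'$ iff $h\approx_a h'$ for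 all $a\in C$. Satisfaction: $h\Vdash p$ iff $hd(h)\in\pi(p)$; Boolean clauses standard; $h\Vdash\mathsf{K}_C\phi$ iff $h'\Vdash\phi$ for all histories $h'$ with $h\approx_C h'$; $h\Vdash\mathsf{H}_C\phi$ iff there is $\mathbf{s}\in V^C$ such that for every history $h'::\mathbf{s}'::w'$ with $h\approx_C h'$ and $\mathbf{s}=_C\mathbf{s}'$, $h'::\mathbf{s}'::w'\Vdash\phi$. *)

theory Defs
  imports Main
begin

(* Agents: the whole type 'a is the agent set \<A>; coalitions are sets C :: 'a set.
   Action profiles in V^\<A> are functions 'a \<Rightarrow> 'v with all values in V;
   a profile in V^C is a function 'a \<Rightarrow> 'v whose values on C lie in V
   (values outside C are irrelevant, only =_C is ever used). *)

datatype ('a, 'p) form =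
    Prop 'p
  | Neg "('a, 'p) form"
  | Imp "('a, 'p) form" "('a, 'p) form"
  | K "'a set" "('a, 'p) form"
  | H "'a set" "('a, 'p) form"

definition Bot :: "('a, 'p) form" where
  "Bot = Neg (Imp (Prop undefined) (Prop undefined))"

record ('s, 'a, 'v, 'p) ets =
  W   :: "'s set"
  sim :: "'a \<Rightarrow> ('s \<times> 's) set"
  Vals :: "'v set"
  M   :: "('s \<times> ('a \<Rightarrow> 'v) \<times> 's) set"
  val :: "'p \<Rightarrow> 's set"

definition profile :: "('s, 'a, 'v, 'p) ets \<Rightarrow> ('a \<Rightarrow> 'v) \<Rightarrow> bool" where
  "profile E s \<longleftrightarrow> (\<forall>a. s a \<in> Vals E)"

definition is_ets :: "('s, 'a, 'v, 'p) ets \<Rightarrow> bool" where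
  "is_ets E \<longleftrightarrow>
     (\<forall>a. equiv (W E) (sim E a)) \<and> Vals E \<noteq> {} \<and>
     (\<forall>w s w'. (w, s, w') \<in> M E \<longrightarrow> w \<in> W E \<and> profile E s \<and> w' \<in> W E) \<and>
     (\<forall>p. val E p \<subseteq> W E)"

definition regular :: "('s, 'a, 'v, 'p) ets \<Rightarrow> bool" where
  "regular E \<longleftrightarrow> (\<forall>w \<in> W E. \<forall>s. profile E s \<longrightarrow> (\<exists>w' \<in> W E. (w, s, w') \<in> M E))"

(* a history (w0, s1, w1, ..., sn, wn) is represented as (w0, [(s1,w1),...,(sn,wn)]) *)
type_synonym ('s, 'a, 'v) history = "'s \<times> (('a \<Rightarrow> 'v) \<times> 's) list"

fun steps_ok :: "('s, 'a, 'v, 'p) ets \<Rightarrow> 's \<Rightarrow> (('a \<Rightarrow> 'v) \<times> 's) list \<Rightarrow> bool" where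
  "steps_ok E w [] = True"
| "steps_ok E w ((s, w') # rest) \<longleftrightarrow> (w, s, w') \<in> M E \<and> steps_ok E w' rest"

definition is_history :: "('s, 'a, 'v, 'p) ets \<Rightarrow> ('s, 'a, 'v) history \<Rightarrow> bool" where
  "is_history E h \<longleftrightarrow> fst h \<in> W E \<and> steps_ok E (fst h) (snd h)
      \<and> (\<forall>(s, w) \<in> set (snd h). profile E s \<and> w \<in> W E)"

definition hd_h :: "('s, 'a, 'v) history \<Rightarrow> 's" where
  "hd_h h = (if snd h = [] then fst h else snd (last (snd h)))"

definition ext :: "('s, 'a, 'v) history \<Rightarrow> ('a \<Rightarrow> 'v) \<Rightarrow> 's \<Rightarrow> ('s, 'a, 'v) history" where
  "ext h s w = (fst h, snd h @ [(s, w)])"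

definition hist_sim :: "('s, 'a, 'v, 'p) ets \<Rightarrow> 'a \<Rightarrow> ('s, 'a, 'v) history \<Rightarrow> ('s, 'a, 'v) history \<Rightarrow> bool" where
  "hist_sim E a h h' \<longleftrightarrow> (fst h, fst h') \<in> sim E a \<and>
      list_all2 (\<lambda>(s, w) (s', w'). s a = s' a \<and> (w, w') \<in> sim E a) (snd h) (snd h')"

definition hist_simC :: "('s, 'a, 'v, 'p) ets \<Rightarrow> 'a set \<Rightarrow> ('s, 'a, 'v) history \<Rightarrow> ('s, 'a, 'v) history \<Rightarrow> bool" where
  "hist_simC E C h h' \<longleftrightarrow> (\<forall>a \<in> C. hist_sim E a h h')"

definition eqC :: "'a set \<Rightarrow> ('a \<Rightarrow> 'v) \<Rightarrow> ('a \<Rightarrow> 'v) \<Rightarrow> bool" where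
  "eqC C s1 s2 \<longleftrightarrow> (\<forall>a \<in> C. s1 a = s2 a)"

fun sat :: "('s, 'a, 'v, 'p) ets \<Rightarrow> ('s, 'a, 'v) history \<Rightarrow> ('a, 'p) form \<Rightarrow> bool" where
  "sat E h (Prop p) \<longleftrightarrow> hd_h h \<in> val E p"
| "sat E h (Neg \<phi>) \<longleftrightarrow> \<not> sat E h \<phi>"
| "sat E h (Imp \<phi> \<psi>) \<longleftrightarrow> (sat E h \<phi> \<longrightarrow> sat E h \<psi>)"
| "sat E h (K C \<phi>) \<longleftrightarrow>
     (\<forall>h'. is_history E h' \<and> hist_simC E C h h' \<longrightarrow> sat E h' \<phi>)"
| "sat E h (H C \<phi>) \<longleftrightarrow>
     (\<exists>s. (\<forall>a \<in> C. s a \<in> Vals E) \<and>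
        (\<forall>h' s' w'. is_history E (ext h' s' w') \<and> hist_simC E C h h' \<and> eqC C s s'
            \<longrightarrow> sat E (ext h' s' w') \<phi>))"

end

theory Submission
  imports Defs
begin

text \<open>\<open>\<bottom>\<close> holds at no history, so a witness for \<open>H\<^sub>C \<bottom>\<close> would have to leave no
  admissible outcome at all. But the witness, a profile on \<open>C\<close>, extends to a full profile;
  regularity gives a successor of \<open>hd(h)\<close> under it; and \<open>h \<approx>\<^sub>C h\<close>, so the extended
  history is such an outcome.\<close>

lemma not_sat_Bot: "\<not> sat E h Bot"
  by (simp add: Bot_def)

lemma steps_ok_snoc:
  "steps_ok E w (xs @ [(s, w')]) \<longleftrightarrow> steps_ok E w xs \<and> (hd_h (w, xs), s, w') \<in> M E"
  by (induction xs arbitrary: w) (auto simp: hd_h_def)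

lemma hd_h_in_W: "is_history E h \<Longrightarrow> hd_h h \<in> W E"
  unfolding is_history_def hd_h_def
  by (cases h) (auto, metis (mono_tags, lifting) case_prodD last_in_set prod.collapse)

lemma is_history_ext:
  assumes "is_history E h" and "(hd_h h, s, w') \<in> M E" and "profile E s" and "w' \<in> W E"
  shows "is_history E (ext h s w')"
  using assms unfolding is_history_def ext_def
  by (cases h) (auto simp: steps_ok_snoc)

lemma regular_history_extends:
  assumes "regular E" and "is_history E h" and "profile E s"
  obtains w' where "is_history E (ext h s w')"
proof -
  obtain w' where "w' \<in> W E" and "(hd_h h, s, w') \<in> M E"
    using assms(1,3) hd_h_in_W[OF assms(2)] unfolding regular_def by blast
  then show ?thesis
    using that is_history_ext[OF assms(2) _ assms(3)] by blast
qed

lemma profile_completion: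
  assumes "is_ets E" and "\<forall>a \<in> C. s a \<in> Vals E"
  obtains s' where "profile E s'" and "eqC C s s'"
proof -
  obtain v where v: "v \<in> Vals E"
    using assms(1) unfolding is_ets_def by auto
  show ?thesis
  proof
    show "profile E (\<lambda>a. if a \<in> C then s a else v)"
      using assms(2) v by (simp add: profile_def)
    show "eqC C s (\<lambda>a. if a \<in> C then s a else v)"
      by (simp add: eqC_def)
  qed
qed

lemma hist_simC_refl:
  assumes "is_ets E" and "is_history E h"
  shows "hist_simC E C h h"
proof -
  have refl: "(x, x) \<in> sim E a" if "x \<in> W E" for a x
    using assms(1) that unfolding is_ets_def by (meson equiv_def refl_onD)
  have "list_all2 (\<lambda>(s, w) (s', w'). s a = s' a \<and> (w, w') \<in> sim E a) (snd h) (snd h)" for a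
    using assms(2) unfolding is_history_def by (auto intro!: list.rel_refl_strong refl)
  moreover have "fst h \<in> W E"
    using assms(2) by (simp add: is_history_def)
  ultimately show ?thesis
    unfolding hist_simC_def hist_sim_def using refl by auto
qed

theorem lemma14:
  fixes E :: "('s, 'a, 'v, 'p) ets" and h :: "('s, 'a, 'v) history" and C :: "'a set"
  assumes "is_ets E" and "regular E" and "is_history E h"
  shows "\<not> sat E h (H C Bot)"
proof
  assume "sat E h (H C Bot)"
  then obtain s where s: "\<forall>a \<in> C. s a \<in> Vals E"
    and Bot_outcomes: "\<And>h' s' w'. is_history E (ext h' s' w') \<Longrightarrow> hist_simC E C h h'
        \<Longrightarrow> eqC C s s' \<Longrightarrow> sat E (ext h' s' w') Bot"
    by auto
  obtain s' where "profile E s'" and "eqC C s s'"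
    using profile_completion[OF assms(1) s] .
  moreover obtain w' where "is_history E (ext h s' w')"
    using regular_history_extends[OF assms(2,3) \<open>profile E s'\<close>] .
  ultimately have "sat E (ext h s' w') Bot"
    using Bot_outcomes hist_simC_refl[OF assms(1,3)] by blast
  then show False
    using not_sat_Bot by blast
qed

end
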